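(* Let $R$ be any binary relation on $U$. Then $\mathrm{DM(RS)}$ is completely distributive if and only if one (equivalently, each) of the lattices $\wp(U)^{\blacktriangle}$, $\wp(U)^{\blacktriangledown}$, $\wp(U)^{\vartriangle}$, $\wp(U)^{\triangledown}$ (ordered by $\subseteq$) is completely distributive.
   Context: Let $U$ be a set and $R\subseteq U\times U$ a binary relation. For $x\in U$, $R(x)=\{y\in U\mid (x,y)\in R\}$ and $\breve R(x)=\{y\in U\mid (y,x)\in R\}$. For $X\subseteq U$: $X^{\blacktriangledown}=\{x\in U\mid R(x)\subseteq X\}$, $X^{\blacktriangle}=\{x\in U\mid R(x)\cap X\neq\emptyset\}$, $X^{\triangledown}=\{x\in U\mid \breve R(x)\subseteq X\}$, $X^{\vartriangle}=\{x\in U\mid \breve R(x)\cap X\neq\emptyset\}$; composites like $X^{\vartriangle\blacktriangledown}$ mean $(X^{\vartriangle})^{\blacktriangledown}$. $\wp(U)^{\blacktriangledown}=\{X^{\blacktriangledown}\mid X\subseteq U\}$ and similarly $\wp(U)^{\blacktriangle},\wp(U)^{\triangledown},\wp(U)^{\vartriangle}$; each is a complete lattice under $\subseteq$. $\mathcal S=\{x\in U\mid |R(x)|=1\}$. $\mathrm{RS}=\{(X^{\blacktriangledown},X^{\blacktriangle})\mid X\subseteq U\}$ ordered coordinatewise; $\mathrm{DM(RS)}$ is its Dedekind–MacNeille completion, identified with $\{(A,B)\in\wp(U)^{\blacktriangledown}\times\wp(U)^{\blacktriangle}\mid A^{\vartriangle\blacktriangle}\subseteq B,\ A\cap\mathcal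 S=B\cap\mathcal S\}$ ordered coordinatewise, with meets $\bigwedge_i(X_i,Y_i)=(\bigcap_iX_i,(\bigcap_iY_i)^{\triangledown\blacktriangle})$ and joins $\bigvee_i(X_i,Y_i)=((\bigcup_iX_i)^{\vartriangle\blacktriangledown},\bigcup_iY_i)$. A complete lattice is completely distributive if $\bigwedge_{i\in I}\bigvee_{j\in J}x_{i,j}=\bigvee_{f\colon I\to J}\bigwedge_{i\in I}x_{i,f(i)}$ for all doubly indexed families. *)

theory Defs
  imports Main
begin

definition succR :: "('a \<times> 'a) set \<Rightarrow> 'a \<Rightarrow> 'a set" where
  "succR R x = {y. (x, y) \<in> R}"

definition predR :: "('a \<times> 'a) set \<Rightarrow> 'a \<Rightarrow> 'a set" where
  "predR R x = {y. (y, x) \<in> R}"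

definition lowB :: "('a \<times> 'a) set \<Rightarrow> 'a set \<Rightarrow> 'a set" where
  "lowB R X = {x. succR R x \<subseteq> X}"

definition uppB :: "('a \<times> 'a) set \<Rightarrow> 'a set \<Rightarrow> 'a set" where
  "uppB R X = {x. succR R x \<inter> X \<noteq> {}}"

definition lowW :: "('a \<times> 'a) set \<Rightarrow> 'a set \<Rightarrow> 'a set" where
  "lowW R X = {x. predR R x \<subseteq> X}"

definition uppW :: "('a \<times> 'a) set \<Rightarrow> 'a set \<Rightarrow> 'a set" where
  "uppW R X = {x. predR R x \<inter> X \<noteq> {}}"

definition singR :: "('a \<times> 'a) set \<Rightarrow> 'a set" where
  "singR R = {x. \<exists>y. succR R x = {y}}"

(* DM(RS), in its identified form *)
definition DMRS :: "('a \<times> 'a) set \<Rightarrow> ('a set \<times> 'a set) set" where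
  "DMRS R = {(A, B). A \<in> range (lowB R) \<and> B \<in> range (uppB R) \<and>
                     uppB R (uppW R A) \<subseteq> B \<and> A \<inter> singR R = B \<inter> singR R}"

definition pair_le :: "'a set \<times> 'a set \<Rightarrow> 'a set \<times> 'a set \<Rightarrow> bool" where
  "pair_le p q \<longleftrightarrow> fst p \<subseteq> fst q \<and> snd p \<subseteq> snd q"

definition is_lub :: "'b set \<Rightarrow> ('b \<Rightarrow> 'b \<Rightarrow> bool) \<Rightarrow> 'b set \<Rightarrow> 'b \<Rightarrow> bool" where
  "is_lub L le A x \<longleftrightarrow> x \<in> L \<and> (\<forall>a\<in>A. le a x) \<and> (\<forall>y\<in>L. (\<forall>a\<in>A. le a y) \<longrightarrow> le x y)"

definition is_glb :: "'b set \<Rightarrow> ('b \<Rightarrow> 'b \<Rightarrow> bool) \<Rightarrow> 'b set \<Rightarrow> 'b \<Rightarrow> bool" where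
  "is_glb L le A x \<longleftrightarrow> x \<in> L \<and> (\<forall>a\<in>A. le x a) \<and> (\<forall>y\<in>L. (\<forall>a\<in>A. le y a) \<longrightarrow> le y x)"

definition lub :: "'b set \<Rightarrow> ('b \<Rightarrow> 'b \<Rightarrow> bool) \<Rightarrow> 'b set \<Rightarrow> 'b" where
  "lub L le A = (THE x. is_lub L le A x)"

definition glb :: "'b set \<Rightarrow> ('b \<Rightarrow> 'b \<Rightarrow> bool) \<Rightarrow> 'b set \<Rightarrow> 'b" where
  "glb L le A = (THE x. is_glb L le A x)"

text \<open>Complete distributivity of the complete lattice (L, le), in the set-family form
  used by Isabelle's class complete_distrib_lattice: for every family of subsets,
  the meet of the joins equals the join of the meets over all choice functions.\<close>
definition compl_distrib :: "'b set \<Rightarrow> ('b \<Rightarrow> 'b \<Rightarrow> bool) \<Rightarrow> bool" where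
  "compl_distrib L le \<longleftrightarrow>
     (\<forall>\<A>. \<A> \<subseteq> Pow L \<longrightarrow>
        glb L le (lub L le ` \<A>) =
        lub L le (glb L le ` {f ` \<A> | f. \<forall>Y\<in>\<A>. f Y \<in> Y}))"

end

(*
  DM(RS) is a complete sublattice of the product of the lattices of lower and upper
  approximations: its joins and meets are computed from those of the two factors. Hence it is
  completely distributive as soon as both factors are, and conversely the second projection maps
  DM(RS) onto the lattice of upper approximations (every upper approximation occurs in a rough
  set) preserving all joins and meets, so complete distributivity descends to that factor.
  The four lattices of approximations are all isomorphic or dually isomorphic: the Galois
  connections between the upper approximation of one relation direction and the lower
  approximation of the other make their ranges isomorphic, and complementation is a dual
  isomorphism between upper and lower approximations. Complete distributivity is self-dual.
*)

theory Submission
  imports Defs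
begin

definition choice_images :: "'b set set \<Rightarrow> 'b set set" where
  "choice_images \<A> = {f ` \<A> | f. \<forall>Y\<in>\<A>. f Y \<in> Y}"

lemma choice_images_subset_Pow: "\<A> \<subseteq> Pow L \<Longrightarrow> choice_images \<A> \<subseteq> Pow L"
  unfolding choice_images_def by blast

lemma compl_distrib_choice_images:
  "compl_distrib L le \<longleftrightarrow>
     (\<forall>\<A>. \<A> \<subseteq> Pow L \<longrightarrow> glb L le (lub L le ` \<A>) = lub L le (glb L le ` choice_images \<A>))"
  unfolding compl_distrib_def choice_images_def ..

lemma is_lub_converse: "is_lub L (\<lambda>x y. le y x) = is_glb L le"
  unfolding is_lub_def is_glb_def by (intro ext) auto

lemma is_glb_converse: "is_glb L (\<lambda>x y. le y x) = is_lub L le"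
  unfolding is_lub_def is_glb_def by (intro ext) auto

lemma lub_converse: "lub L (\<lambda>x y. le y x) = glb L le"
  unfolding lub_def glb_def is_lub_converse ..

lemma glb_converse: "glb L (\<lambda>x y. le y x) = lub L le"
  unfolding lub_def glb_def is_glb_converse ..

locale complete_lattice_on =
  fixes L :: "'b set" and le :: "'b \<Rightarrow> 'b \<Rightarrow> bool"
  assumes reflexive: "x \<in> L \<Longrightarrow> le x x"
    and antisymmetric: "\<lbrakk>x \<in> L; y \<in> L; le x y; le y x\<rbrakk> \<Longrightarrow> x = y"
    and transitive: "\<lbrakk>x \<in> L; y \<in> L; z \<in> L; le x y; le y z\<rbrakk> \<Longrightarrow> le x z"
    and lub_exists: "X \<subseteq> L \<Longrightarrow> \<exists>x. is_lub L le X x"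
    and glb_exists: "X \<subseteq> L \<Longrightarrow> \<exists>x. is_glb L le X x"
begin

lemma lub_unique: "is_lub L le X x \<Longrightarrow> lub L le X = x"
  unfolding lub_def by (rule the_equality) (auto simp: is_lub_def intro: antisymmetric)

lemma glb_unique: "is_glb L le X x \<Longrightarrow> glb L le X = x"
  unfolding glb_def by (rule the_equality) (auto simp: is_glb_def intro: antisymmetric)

lemma is_lub_lub: "X \<subseteq> L \<Longrightarrow> is_lub L le X (lub L le X)"
  using lub_exists lub_unique by blast

lemma is_glb_glb: "X \<subseteq> L \<Longrightarrow> is_glb L le X (glb L le X)"
  using glb_exists glb_unique by blast

lemma lub_in: "X \<subseteq> L \<Longrightarrow> lub L le X \<in> L"
  and lub_upper: "X \<subseteq> L \<Longrightarrow> a \<in> X \<Longrightarrow> le a (lub L le X)"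
  and lub_least: "X \<subseteq> L \<Longrightarrow> y \<in> L \<Longrightarrow> (\<And>a. a \<in> X \<Longrightarrow> le a y) \<Longrightarrow> le (lub L le X) y"
  using is_lub_lub unfolding is_lub_def by blast+

lemma glb_in: "X \<subseteq> L \<Longrightarrow> glb L le X \<in> L"
  and glb_lower: "X \<subseteq> L \<Longrightarrow> a \<in> X \<Longrightarrow> le (glb L le X) a"
  and glb_greatest: "X \<subseteq> L \<Longrightarrow> y \<in> L \<Longrightarrow> (\<And>a. a \<in> X \<Longrightarrow> le y a) \<Longrightarrow> le y (glb L le X)"
  using is_glb_glb unfolding is_glb_def by blast+

lemma lub_image_subset: "\<A> \<subseteq> Pow L \<Longrightarrow> lub L le ` \<A> \<subseteq> L"
  using lub_in by blast

lemma glb_image_subset: "\<A> \<subseteq> Pow L \<Longrightarrow> glb L le ` \<A> \<subseteq> L"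
  using glb_in by blast

lemma converse: "complete_lattice_on L (\<lambda>x y. le y x)"
proof
  show "\<exists>x. is_lub L (\<lambda>x y. le y x) X x" if "X \<subseteq> L" for X
    unfolding is_lub_converse using glb_exists[OF that] .
  show "\<exists>x. is_glb L (\<lambda>x y. le y x) X x" if "X \<subseteq> L" for X
    unfolding is_glb_converse using lub_exists[OF that] .
qed (fact reflexive, metis antisymmetric, metis transitive)

lemma join_meets_le_meet_joins:
  assumes A: "\<A> \<subseteq> Pow L"
  shows "le (lub L le (glb L le ` choice_images \<A>)) (glb L le (lub L le ` \<A>))"
proof (rule lub_least)
  show "glb L le ` choice_images \<A> \<subseteq> L"
    using glb_image_subset[OF choice_images_subset_Pow[OF A]] .
  show "glb L le (lub L le ` \<A>) \<in> L"
    using glb_in[OF lub_image_subset[OF A]] .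
  fix a assume "a \<in> glb L le ` choice_images \<A>"
  then obtain f where a: "a = glb L le (f ` \<A>)" and f: "\<forall>Y\<in>\<A>. f Y \<in> Y"
    unfolding choice_images_def by blast
  have fA: "f ` \<A> \<subseteq> L" using f A by blast
  show "le a (glb L le (lub L le ` \<A>))"
    unfolding a
  proof (rule glb_greatest[OF lub_image_subset[OF A] glb_in[OF fA]])
    fix b assume "b \<in> lub L le ` \<A>"
    then obtain Y where Y: "Y \<in> \<A>" and b: "b = lub L le Y" by blast
    have YL: "Y \<subseteq> L" using Y A by blast
    have fY: "f Y \<in> Y" using f Y by blast
    have "le (glb L le (f ` \<A>)) (f Y)" using Y by (intro glb_lower[OF fA]) simp
    moreover have "le (f Y) b" unfolding b using fY by (rule lub_upper[OF YL])
    ultimately show "le (glb L le (f ` \<A>)) b"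
      using transitive[OF glb_in[OF fA] _ lub_in[OF YL]] fY YL b by blast
  qed
qed

lemma compl_distrib_iff_le:
  "compl_distrib L le \<longleftrightarrow>
     (\<forall>\<A>. \<A> \<subseteq> Pow L \<longrightarrow> le (glb L le (lub L le ` \<A>)) (lub L le (glb L le ` choice_images \<A>)))"
  unfolding compl_distrib_choice_images
proof (intro iffI allI impI)
  fix \<A> :: "'b set set"
  assume A: "\<A> \<subseteq> Pow L"
  have in_L: "glb L le (lub L le ` \<A>) \<in> L" "lub L le (glb L le ` choice_images \<A>) \<in> L"
    using glb_in[OF lub_image_subset[OF A]]
      lub_in[OF glb_image_subset[OF choice_images_subset_Pow[OF A]]] .
  { assume "\<forall>\<A>. \<A> \<subseteq> Pow L \<longrightarrow> glb L le (lub L le ` \<A>) = lub L le (glb L le ` choice_images \<A>)"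
    then have "glb L le (lub L le ` \<A>) = lub L le (glb L le ` choice_images \<A>)" using A by blast
    then show "le (glb L le (lub L le ` \<A>)) (lub L le (glb L le ` choice_images \<A>))"
      using reflexive[OF in_L(1)] by simp }
  { assume "\<forall>\<A>. \<A> \<subseteq> Pow L \<longrightarrow> le (glb L le (lub L le ` \<A>)) (lub L le (glb L le ` choice_images \<A>))"
    then have "le (glb L le (lub L le ` \<A>)) (lub L le (glb L le ` choice_images \<A>))" using A by blast
    then show "glb L le (lub L le ` \<A>) = lub L le (glb L le ` choice_images \<A>)"
      using antisymmetric[OF in_L] join_meets_le_meet_joins[OF A] by blast }
qed

lemma compl_distribD:
  "compl_distrib L le \<Longrightarrow> \<A> \<subseteq> Pow L \<Longrightarrow>
     glb L le (lub L le ` \<A>) = lub L le (glb L le ` choice_images \<A>)"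
  unfolding compl_distrib_choice_images by blast

text \<open>Apply distributivity to the family \<open>\<C>\<close> of all choice images of \<open>\<A>\<close>:
  if the meet \<open>a\<close> of a choice \<open>F\<close> on \<open>\<C>\<close> lay below no \<open>glb Z\<close>,
  \<open>Z \<in> \<A>\<close>, there would be a choice \<open>G\<close> on \<open>\<A>\<close> avoiding the up-set of \<open>a\<close>; but \<open>F\<close>
  picks an element of \<open>G ` \<A>\<close>, which lies above \<open>a\<close>.\<close>
lemma compl_distrib_converse:
  assumes cd: "compl_distrib L le"
  shows "compl_distrib L (\<lambda>x y. le y x)"
proof -
  have "le (glb L le (lub L le ` choice_images \<A>)) (lub L le (glb L le ` \<A>))"
    if A: "\<A> \<subseteq> Pow L" for \<A>
  proof -
    define \<C> where "\<C> = choice_images \<A>"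
    have C: "\<C> \<subseteq> Pow L" unfolding \<C>_def by (rule choice_images_subset_Pow[OF A])
    have gA: "glb L le ` \<A> \<subseteq> L" by (rule glb_image_subset[OF A])
    have "le (lub L le (glb L le ` choice_images \<C>)) (lub L le (glb L le ` \<A>))"
    proof (rule lub_least[OF glb_image_subset[OF choice_images_subset_Pow[OF C]] lub_in[OF gA]])
      fix a assume "a \<in> glb L le ` choice_images \<C>"
      then obtain F where a: "a = glb L le (F ` \<C>)" and F: "\<forall>Y\<in>\<C>. F Y \<in> Y"
        unfolding choice_images_def by blast
      have FC: "F ` \<C> \<subseteq> L" using F C by blast
      have aL: "a \<in> L" unfolding a by (rule glb_in[OF FC])
      show "le a (lub L le (glb L le ` \<A>))"
      proof (cases "\<exists>Z\<in>\<A>. le a (glb L le Z)")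
        case True
        then obtain Z where Z: "Z \<in> \<A>" "le a (glb L le Z)" by blast
        have ZL: "Z \<subseteq> L" using Z(1) A by blast
        have "le (glb L le Z) (lub L le (glb L le ` \<A>))"
          using Z(1) by (intro lub_upper[OF gA]) (rule imageI)
        then show ?thesis
          using transitive[OF aL glb_in[OF ZL] lub_in[OF gA] Z(2)] by simp
      next
        case False
        have "\<exists>x\<in>Z. \<not> le a x" if Z: "Z \<in> \<A>" for Z
        proof (rule ccontr)
          assume "\<not> (\<exists>x\<in>Z. \<not> le a x)"
          then have "le a (glb L le Z)"
            using Z A by (intro glb_greatest[OF _ aL]) auto
          with False Z show False by simp
        qed
        then obtain G where G: "\<And>Z. Z \<in> \<A> \<Longrightarrow> G Z \<in> Z \<and> \<not> le a (G Z)" by metis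
        then have GC: "G ` \<A> \<in> \<C>" unfolding \<C>_def choice_images_def by blast
        then obtain Z where Z: "Z \<in> \<A>" "F (G ` \<A>) = G Z" using F by blast
        have "le a (F (G ` \<A>))" unfolding a using GC by (intro glb_lower[OF FC]) (rule imageI)
        with Z G show ?thesis by simp
      qed
    qed
    with compl_distribD[OF cd C] show ?thesis unfolding \<C>_def by simp
  qed
  then show ?thesis
    unfolding complete_lattice_on.compl_distrib_iff_le[OF converse]
      lub_converse[of L le] glb_converse[of L le]
    by simp
qed

lemma compl_distrib_converse_iff: "compl_distrib L (\<lambda>x y. le y x) \<longleftrightarrow> compl_distrib L le"
proof
  show "compl_distrib L le" if "compl_distrib L (\<lambda>x y. le y x)"
    using complete_lattice_on.compl_distrib_converse[OF converse that] by simp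
qed (rule compl_distrib_converse)

end

lemma compl_distrib_image:
  assumes L: "complete_lattice_on L le" and M: "complete_lattice_on M le'"
    and onto: "\<phi> ` L = M"
    and lub: "\<And>X. X \<subseteq> L \<Longrightarrow> \<phi> (lub L le X) = lub M le' (\<phi> ` X)"
    and glb: "\<And>X. X \<subseteq> L \<Longrightarrow> \<phi> (glb L le X) = glb M le' (\<phi> ` X)"
    and cd: "compl_distrib L le"
  shows "compl_distrib M le'"
proof -
  interpret L: complete_lattice_on L le by fact
  interpret M: complete_lattice_on M le' by fact
  have "le' (glb M le' (lub M le' ` \<A>)) (lub M le' (glb M le' ` choice_images \<A>))"
    if A: "\<A> \<subseteq> Pow M" for \<A>
  proof -
    define pre where "pre Y = L \<inter> \<phi> -` Y" for Y
    define \<A>' where "\<A>' = pre ` \<A>"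
    have A': "\<A>' \<subseteq> Pow L" unfolding \<A>'_def pre_def by blast
    have img_pre: "\<phi> ` pre Y = Y" if "Y \<in> \<A>" for Y
      using that A onto unfolding pre_def by blast
    have CA': "choice_images \<A>' \<subseteq> Pow L" by (rule choice_images_subset_Pow[OF A'])
    have CA: "glb M le' ` choice_images \<A> \<subseteq> M"
      by (rule M.glb_image_subset[OF choice_images_subset_Pow[OF A]])
    have "lub M le' ` \<A> = \<phi> ` lub L le ` \<A>'"
    proof -
      have "lub M le' Y = \<phi> (lub L le (pre Y))" if "Y \<in> \<A>" for Y
        using lub[of "pre Y"] img_pre[OF that] unfolding pre_def by simp
      then show ?thesis unfolding \<A>'_def image_image by (rule image_cong[OF refl])
    qed
    then have "glb M le' (lub M le' ` \<A>) = \<phi> (glb L le (lub L le ` \<A>'))"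
      using glb[OF L.lub_image_subset[OF A']] by simp
    also have "\<dots> = \<phi> (lub L le (glb L le ` choice_images \<A>'))"
      using L.compl_distribD[OF cd A'] by simp
    also have "\<dots> = lub M le' (\<phi> ` glb L le ` choice_images \<A>')"
      by (rule lub[OF L.glb_image_subset[OF CA']])
    also have "le' \<dots> (lub M le' (glb M le' ` choice_images \<A>))"
    proof (rule M.lub_least[OF _ M.lub_in[OF CA]])
      show "\<phi> ` glb L le ` choice_images \<A>' \<subseteq> M"
        using onto L.glb_image_subset[OF CA'] by blast
      fix a assume "a \<in> \<phi> ` glb L le ` choice_images \<A>'"
      then obtain g where a: "a = \<phi> (glb L le (g ` \<A>'))" and g: "\<forall>Y\<in>\<A>'. g Y \<in> Y"
        unfolding choice_images_def by blast
      have g_pre: "\<phi> (g (pre Y)) \<in> Y" if "Y \<in> \<A>" for Y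
      proof -
        have "g (pre Y) \<in> pre Y" using g that unfolding \<A>'_def by blast
        then show ?thesis unfolding pre_def by blast
      qed
      have gA': "g ` \<A>' \<subseteq> L" using g A' by blast
      have "a = glb M le' ((\<lambda>Y. \<phi> (g (pre Y))) ` \<A>)"
        unfolding a glb[OF gA'] by (simp add: \<A>'_def image_image)
      moreover have "(\<lambda>Y. \<phi> (g (pre Y))) ` \<A> \<in> choice_images \<A>"
        unfolding choice_images_def using g_pre by blast
      ultimately show "le' a (lub M le' (glb M le' ` choice_images \<A>))"
        using M.lub_upper[OF CA] by simp
    qed
    finally show ?thesis .
  qed
  then show ?thesis unfolding M.compl_distrib_iff_le by blast
qed

lemma order_iso_lub:
  assumes L: "complete_lattice_on L le" and M: "complete_lattice_on M le'"
    and bij: "bij_betw \<phi> L M"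
    and ord: "\<And>x y. x \<in> L \<Longrightarrow> y \<in> L \<Longrightarrow> le x y \<longleftrightarrow> le' (\<phi> x) (\<phi> y)"
    and X: "X \<subseteq> L"
  shows "\<phi> (lub L le X) = lub M le' (\<phi> ` X)"
proof -
  interpret L: complete_lattice_on L le by fact
  interpret M: complete_lattice_on M le' by fact
  have onto: "\<phi> ` L = M" using bij by (rule bij_betw_imp_surj_on)
  have lubL: "lub L le X \<in> L" by (rule L.lub_in[OF X])
  have "is_lub M le' (\<phi> ` X) (\<phi> (lub L le X))"
    unfolding is_lub_def
  proof (intro conjI ballI impI)
    show "\<phi> (lub L le X) \<in> M" using onto lubL by blast
    fix b assume "b \<in> \<phi> ` X"
    then obtain a where a: "a \<in> X" and b: "b = \<phi> a" by blast
    have "le a (lub L le X)" using a by (rule L.lub_upper[OF X])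
    then show "le' b (\<phi> (lub L le X))" unfolding b using ord[OF _ lubL] a X by blast
  next
    fix y assume "y \<in> M" and ub: "\<forall>b\<in>\<phi> ` X. le' b y"
    then obtain x where x: "x \<in> L" and y: "y = \<phi> x" using onto by blast
    have "le a x" if "a \<in> X" for a
      using ub that ord[OF _ x] X unfolding y by blast
    then have "le (lub L le X) x" by (rule L.lub_least[OF X x])
    then show "le' (\<phi> (lub L le X)) y" unfolding y using ord[OF lubL x] by blast
  qed
  then show ?thesis by (rule M.lub_unique[symmetric])
qed

lemma order_iso_glb:
  assumes L: "complete_lattice_on L le" and M: "complete_lattice_on M le'"
    and bij: "bij_betw \<phi> L M"
    and ord: "\<And>x y. x \<in> L \<Longrightarrow> y \<in> L \<Longrightarrow> le x y \<longleftrightarrow> le' (\<phi> x) (\<phi> y)"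
    and X: "X \<subseteq> L"
  shows "\<phi> (glb L le X) = glb M le' (\<phi> ` X)"
  using order_iso_lub[OF complete_lattice_on.converse[OF L] complete_lattice_on.converse[OF M] bij _ X]
    ord
  unfolding lub_converse[of L le] lub_converse[of M le'] by blast

lemma compl_distrib_order_iso_imp:
  assumes L: "complete_lattice_on L le" and M: "complete_lattice_on M le'"
    and bij: "bij_betw \<phi> L M"
    and ord: "\<And>x y. x \<in> L \<Longrightarrow> y \<in> L \<Longrightarrow> le x y \<longleftrightarrow> le' (\<phi> x) (\<phi> y)"
    and cd: "compl_distrib L le"
  shows "compl_distrib M le'"
  using compl_distrib_image[OF L M bij_betw_imp_surj_on[OF bij]
      order_iso_lub[OF L M bij ord] order_iso_glb[OF L M bij ord] cd] .

lemma compl_distrib_order_iso: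
  assumes L: "complete_lattice_on L le" and M: "complete_lattice_on M le'"
    and bij: "bij_betw \<phi> L M"
    and ord: "\<And>x y. x \<in> L \<Longrightarrow> y \<in> L \<Longrightarrow> le x y \<longleftrightarrow> le' (\<phi> x) (\<phi> y)"
  shows "compl_distrib L le \<longleftrightarrow> compl_distrib M le'"
proof
  have ord': "le' x y \<longleftrightarrow> le (inv_into L \<phi> x) (inv_into L \<phi> y)" if "x \<in> M" "y \<in> M" for x y
    using ord[of "inv_into L \<phi> x" "inv_into L \<phi> y"] that bij
    by (simp add: bij_betw_inv_into_right bij_betw_imp_surj_on inv_into_into)
  show "compl_distrib L le" if "compl_distrib M le'"
    using compl_distrib_order_iso_imp[OF M L bij_betw_inv_into[OF bij] ord' that] .
qed (rule compl_distrib_order_iso_imp[OF L M bij ord])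

locale complete_sublattice = complete_lattice_on +
  fixes N
  assumes subset: "N \<subseteq> L"
    and lub_closed: "X \<subseteq> N \<Longrightarrow> lub L le X \<in> N"
    and glb_closed: "X \<subseteq> N \<Longrightarrow> glb L le X \<in> N"
begin

lemma is_lub_sub: "X \<subseteq> N \<Longrightarrow> is_lub N le X (lub L le X)"
  using is_lub_lub[of X] lub_closed[of X] subset unfolding is_lub_def by blast

lemma is_glb_sub: "X \<subseteq> N \<Longrightarrow> is_glb N le X (glb L le X)"
  using is_glb_glb[of X] glb_closed[of X] subset unfolding is_glb_def by blast

lemma complete_lattice_on_sub: "complete_lattice_on N le"
proof
  show "\<exists>x. is_lub N le X x" if "X \<subseteq> N" for X using is_lub_sub[OF that] ..
  show "\<exists>x. is_glb N le X x" if "X \<subseteq> N" for X using is_glb_sub[OF that] ..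
qed (use subset reflexive antisymmetric transitive in blast)+

lemma lub_sub: "X \<subseteq> N \<Longrightarrow> lub N le X = lub L le X"
  using complete_lattice_on.lub_unique[OF complete_lattice_on_sub is_lub_sub] .

lemma glb_sub: "X \<subseteq> N \<Longrightarrow> glb N le X = glb L le X"
  using complete_lattice_on.glb_unique[OF complete_lattice_on_sub is_glb_sub] .

lemma compl_distrib_sub:
  assumes cd: "compl_distrib L le"
  shows "compl_distrib N le"
  unfolding compl_distrib_choice_images
proof (intro allI impI)
  fix \<A> assume A: "\<A> \<subseteq> Pow N"
  have AL: "\<A> \<subseteq> Pow L" using A subset by blast
  have C: "choice_images \<A> \<subseteq> Pow N" by (rule choice_images_subset_Pow[OF A])
  have lubs: "lub N le ` \<A> = lub L le ` \<A>"
    using A by (intro image_cong) (auto simp: lub_sub)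
  have glbs: "glb N le ` choice_images \<A> = glb L le ` choice_images \<A>"
    using C by (intro image_cong) (auto simp: glb_sub)
  have "lub L le ` \<A> \<subseteq> N" "glb L le ` choice_images \<A> \<subseteq> N"
    using A C lub_closed glb_closed by blast+
  then show "glb N le (lub N le ` \<A>) = lub N le (glb N le ` choice_images \<A>)"
    unfolding lubs glbs using glb_sub lub_sub compl_distribD[OF cd AL] by simp
qed

end

lemma (in complete_lattice_on) meet_joins_le_join_projected_meets:
  assumes M: "complete_lattice_on M leM" and cd: "compl_distrib L le"
    and \<pi>: "\<pi> ` M \<subseteq> L" and \<pi>_glb: "\<And>X. X \<subseteq> M \<Longrightarrow> \<pi> (glb M leM X) = glb L le (\<pi> ` X)"
    and A: "\<A> \<subseteq> Pow M"
  shows "le (glb L le (lub L le ` image \<pi> ` \<A>)) (lub L le (\<pi> ` glb M leM ` choice_images \<A>))"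
proof -
  interpret M: complete_lattice_on M leM by fact
  define \<A>\<^sub>\<pi> where "\<A>\<^sub>\<pi> = image \<pi> ` \<A>"
  have A\<pi>: "\<A>\<^sub>\<pi> \<subseteq> Pow L" unfolding \<A>\<^sub>\<pi>_def using A \<pi> by blast
  have S: "\<pi> ` glb M leM ` choice_images \<A> \<subseteq> L"
    using \<pi> M.glb_image_subset[OF choice_images_subset_Pow[OF A]] by blast
  have "glb L le (lub L le ` \<A>\<^sub>\<pi>) = lub L le (glb L le ` choice_images \<A>\<^sub>\<pi>)"
    by (rule compl_distribD[OF cd A\<pi>])
  also have "le \<dots> (lub L le (\<pi> ` glb M leM ` choice_images \<A>))"
  proof (rule lub_least[OF glb_image_subset[OF choice_images_subset_Pow[OF A\<pi>]] lub_in[OF S]])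
    fix a assume "a \<in> glb L le ` choice_images \<A>\<^sub>\<pi>"
    then obtain g where a: "a = glb L le (g ` \<A>\<^sub>\<pi>)" and g: "\<forall>Y\<in>\<A>\<^sub>\<pi>. g Y \<in> Y"
      unfolding choice_images_def by blast
    define f where "f Y = (SOME p. p \<in> Y \<and> \<pi> p = g (\<pi> ` Y))" for Y
    have f: "f Y \<in> Y \<and> \<pi> (f Y) = g (\<pi> ` Y)" if "Y \<in> \<A>" for Y
    proof -
      have "g (\<pi> ` Y) \<in> \<pi> ` Y" using g that unfolding \<A>\<^sub>\<pi>_def by blast
      then have "\<exists>p. p \<in> Y \<and> \<pi> p = g (\<pi> ` Y)" by force
      then show ?thesis unfolding f_def by (rule someI_ex)
    qed
    have fA: "f ` \<A> \<subseteq> M" using f A by blast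
    have "\<pi> ` f ` \<A> = g ` \<A>\<^sub>\<pi>" unfolding \<A>\<^sub>\<pi>_def image_image using f by force
    then have "a = \<pi> (glb M leM (f ` \<A>))" unfolding a \<pi>_glb[OF fA] by simp
    moreover have "f ` \<A> \<in> choice_images \<A>" unfolding choice_images_def using f by blast
    ultimately show "le a (lub L le (\<pi> ` glb M leM ` choice_images \<A>))"
      using lub_upper[OF S] by simp
  qed
  finally show ?thesis unfolding \<A>\<^sub>\<pi>_def .
qed

definition prod_le :: "('b \<Rightarrow> 'b \<Rightarrow> bool) \<Rightarrow> ('c \<Rightarrow> 'c \<Rightarrow> bool) \<Rightarrow> 'b \<times> 'c \<Rightarrow> 'b \<times> 'c \<Rightarrow> bool" where
  "prod_le le1 le2 p q \<longleftrightarrow> le1 (fst p) (fst q) \<and> le2 (snd p) (snd q)"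

lemma prod_le_Pair: "prod_le le1 le2 (a, b) (c, d) \<longleftrightarrow> le1 a c \<and> le2 b d"
  by (simp add: prod_le_def)

lemma prod_le_converse:
  "prod_le (\<lambda>x y. le1 y x) (\<lambda>x y. le2 y x) = (\<lambda>p q. prod_le le1 le2 q p)"
  unfolding prod_le_def by (intro ext) simp

lemma is_lub_prod:
  assumes L1: "complete_lattice_on L1 le1" and L2: "complete_lattice_on L2 le2"
    and X: "X \<subseteq> L1 \<times> L2"
  shows "is_lub (L1 \<times> L2) (prod_le le1 le2) X (lub L1 le1 (fst ` X), lub L2 le2 (snd ` X))"
proof -
  interpret L1: complete_lattice_on L1 le1 by fact
  interpret L2: complete_lattice_on L2 le2 by fact
  have X1: "fst ` X \<subseteq> L1" and X2: "snd ` X \<subseteq> L2" using X by auto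
  show ?thesis
    unfolding is_lub_def
  proof (intro conjI ballI impI)
    show "(lub L1 le1 (fst ` X), lub L2 le2 (snd ` X)) \<in> L1 \<times> L2"
      using L1.lub_in[OF X1] L2.lub_in[OF X2] by simp
    show "prod_le le1 le2 a (lub L1 le1 (fst ` X), lub L2 le2 (snd ` X))" if "a \<in> X" for a
      unfolding prod_le_def using that L1.lub_upper[OF X1] L2.lub_upper[OF X2] by simp
    fix y assume y: "y \<in> L1 \<times> L2" and ub: "\<forall>a\<in>X. prod_le le1 le2 a y"
    have "le1 (lub L1 le1 (fst ` X)) (fst y)"
      using y ub by (intro L1.lub_least[OF X1]) (auto simp: prod_le_def)
    moreover have "le2 (lub L2 le2 (snd ` X)) (snd y)"
      using y ub by (intro L2.lub_least[OF X2]) (auto simp: prod_le_def)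
    ultimately show "prod_le le1 le2 (lub L1 le1 (fst ` X), lub L2 le2 (snd ` X)) y"
      unfolding prod_le_def by simp
  qed
qed

lemma is_glb_prod:
  assumes L1: "complete_lattice_on L1 le1" and L2: "complete_lattice_on L2 le2"
    and X: "X \<subseteq> L1 \<times> L2"
  shows "is_glb (L1 \<times> L2) (prod_le le1 le2) X (glb L1 le1 (fst ` X), glb L2 le2 (snd ` X))"
  using is_lub_prod[OF complete_lattice_on.converse[OF L1] complete_lattice_on.converse[OF L2] X]
  unfolding prod_le_converse[of le1 le2] is_lub_converse[of "L1 \<times> L2" "prod_le le1 le2"]
    lub_converse[of L1 le1] lub_converse[of L2 le2] .

lemma complete_lattice_on_prod:
  assumes L1: "complete_lattice_on L1 le1" and L2: "complete_lattice_on L2 le2"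
  shows "complete_lattice_on (L1 \<times> L2) (prod_le le1 le2)"
proof -
  interpret L1: complete_lattice_on L1 le1 by fact
  interpret L2: complete_lattice_on L2 le2 by fact
  show ?thesis
  proof
    show "\<exists>x. is_lub (L1 \<times> L2) (prod_le le1 le2) X x" if "X \<subseteq> L1 \<times> L2" for X
      using is_lub_prod[OF L1 L2 that] ..
    show "\<exists>x. is_glb (L1 \<times> L2) (prod_le le1 le2) X x" if "X \<subseteq> L1 \<times> L2" for X
      using is_glb_prod[OF L1 L2 that] ..
  qed (auto simp: prod_le_def prod_eq_iff intro: L1.reflexive L2.reflexive L1.antisymmetric
      L2.antisymmetric L1.transitive L2.transitive)
qed

lemma lub_prod:
  "complete_lattice_on L1 le1 \<Longrightarrow> complete_lattice_on L2 le2 \<Longrightarrow> X \<subseteq> L1 \<times> L2 \<Longrightarrow>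
    lub (L1 \<times> L2) (prod_le le1 le2) X = (lub L1 le1 (fst ` X), lub L2 le2 (snd ` X))"
  by (rule complete_lattice_on.lub_unique[OF complete_lattice_on_prod is_lub_prod])

lemma glb_prod:
  "complete_lattice_on L1 le1 \<Longrightarrow> complete_lattice_on L2 le2 \<Longrightarrow> X \<subseteq> L1 \<times> L2 \<Longrightarrow>
    glb (L1 \<times> L2) (prod_le le1 le2) X = (glb L1 le1 (fst ` X), glb L2 le2 (snd ` X))"
  by (rule complete_lattice_on.glb_unique[OF complete_lattice_on_prod is_glb_prod])

lemma compl_distrib_prod:
  assumes L1: "complete_lattice_on L1 le1" and L2: "complete_lattice_on L2 le2"
    and cd1: "compl_distrib L1 le1" and cd2: "compl_distrib L2 le2"
  shows "compl_distrib (L1 \<times> L2) (prod_le le1 le2)"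
proof -
  let ?P = "L1 \<times> L2" and ?le = "prod_le le1 le2"
  interpret P: complete_lattice_on ?P ?le by (rule complete_lattice_on_prod[OF L1 L2])
  have glb_fst: "fst (glb ?P ?le X) = glb L1 le1 (fst ` X)"
    and glb_snd: "snd (glb ?P ?le X) = glb L2 le2 (snd ` X)" if "X \<subseteq> ?P" for X
    using glb_prod[OF L1 L2 that] by simp_all
  have "prod_le le1 le2 (glb ?P ?le (lub ?P ?le ` \<A>)) (lub ?P ?le (glb ?P ?le ` choice_images \<A>))"
    if A: "\<A> \<subseteq> Pow ?P" for \<A>
  proof -
    have LA: "lub ?P ?le ` \<A> \<subseteq> ?P" by (rule P.lub_image_subset[OF A])
    have GA: "glb ?P ?le ` choice_images \<A> \<subseteq> ?P"
      by (rule P.glb_image_subset[OF choice_images_subset_Pow[OF A]])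
    have "fst ` lub ?P ?le ` \<A> = lub L1 le1 ` image fst ` \<A>"
      and "snd ` lub ?P ?le ` \<A> = lub L2 le2 ` image snd ` \<A>"
      unfolding image_image using A by (auto simp: lub_prod[OF L1 L2] intro!: image_cong)
    moreover have "fst ` ?P \<subseteq> L1" "snd ` ?P \<subseteq> L2" by auto
    ultimately show ?thesis
      unfolding glb_prod[OF L1 L2 LA] lub_prod[OF L1 L2 GA] prod_le_Pair
      using complete_lattice_on.meet_joins_le_join_projected_meets[OF L1 P.complete_lattice_on_axioms
          cd1 _ glb_fst A]
        complete_lattice_on.meet_joins_le_join_projected_meets[OF L2 P.complete_lattice_on_axioms
          cd2 _ glb_snd A]
      by simp
  qed
  then show ?thesis unfolding P.compl_distrib_iff_le by blast
qed

lemma is_lub_Sup: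
  fixes L :: "'a::complete_lattice set"
  shows "X \<subseteq> L \<Longrightarrow> Sup X \<in> L \<Longrightarrow> is_lub L (\<le>) X (Sup X)"
  unfolding is_lub_def by (auto intro: Sup_upper Sup_least)

lemma is_glb_Inf:
  fixes L :: "'a::complete_lattice set"
  shows "X \<subseteq> L \<Longrightarrow> Inf X \<in> L \<Longrightarrow> is_glb L (\<le>) X (Inf X)"
  unfolding is_glb_def by (auto intro: Inf_lower Inf_greatest)

lemma complete_lattice_on_Sup_closed:
  fixes L :: "'a::complete_lattice set"
  assumes Sup_closed: "\<And>X. X \<subseteq> L \<Longrightarrow> Sup X \<in> L"
  shows "complete_lattice_on L (\<le>)"
proof
  show "\<exists>x. is_lub L (\<le>) X x" if "X \<subseteq> L" for X
    using is_lub_Sup[OF that Sup_closed[OF that]] ..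
  show "\<exists>x. is_glb L (\<le>) X x" if "X \<subseteq> L" for X
  proof
    show "is_glb L (\<le>) X (Sup {z \<in> L. \<forall>a\<in>X. z \<le> a})"
      unfolding is_glb_def using Sup_closed[of "{z \<in> L. \<forall>a\<in>X. z \<le> a}"]
      by (auto intro: Sup_upper Sup_least)
  qed
qed auto

lemma complete_lattice_on_Inf_closed:
  fixes L :: "'a::complete_lattice set"
  assumes Inf_closed: "\<And>X. X \<subseteq> L \<Longrightarrow> Inf X \<in> L"
  shows "complete_lattice_on L (\<le>)"
proof
  show "\<exists>x. is_glb L (\<le>) X x" if "X \<subseteq> L" for X
    using is_glb_Inf[OF that Inf_closed[OF that]] ..
  show "\<exists>x. is_lub L (\<le>) X x" if "X \<subseteq> L" for X
  proof
    show "is_lub L (\<le>) X (Inf {z \<in> L. \<forall>a\<in>X. a \<le> z})"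
      unfolding is_lub_def using Inf_closed[of "{z \<in> L. \<forall>a\<in>X. a \<le> z}"]
      by (auto intro: Inf_lower Inf_greatest)
  qed
qed auto

locale galois_connection =
  fixes f :: "'a::complete_lattice \<Rightarrow> 'b::complete_lattice" and g :: "'b \<Rightarrow> 'a"
  assumes adjoint: "f x \<le> y \<longleftrightarrow> x \<le> g y"
begin

lemma unit: "x \<le> g (f x)"
  using adjoint by blast

lemma counit: "f (g y) \<le> y"
  using adjoint by blast

lemma mono_left: "x \<le> x' \<Longrightarrow> f x \<le> f x'"
  using adjoint unit order_trans by metis

lemma mono_right: "y \<le> y' \<Longrightarrow> g y \<le> g y'"
  using adjoint counit order_trans by metis

lemma left_right_left: "f (g (f x)) = f x"
  by (intro antisym counit mono_left unit)

lemma right_left_right: "g (f (g y)) = g y"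
  by (intro antisym unit mono_right counit)

lemma left_Sup: "f (Sup X) = Sup (f ` X)"
proof (rule antisym)
  show "f (Sup X) \<le> Sup (f ` X)"
    unfolding adjoint by (rule Sup_least) (simp add: Sup_upper flip: adjoint)
  show "Sup (f ` X) \<le> f (Sup X)"
    by (rule Sup_least) (auto intro: mono_left Sup_upper)
qed

lemma right_Inf: "g (Inf Y) = Inf (g ` Y)"
proof (rule antisym)
  show "Inf (g ` Y) \<le> g (Inf Y)"
    unfolding adjoint[symmetric] by (rule Inf_greatest) (simp add: Inf_lower adjoint)
  show "g (Inf Y) \<le> Inf (g ` Y)"
    by (rule Inf_greatest) (auto intro: mono_right Inf_lower)
qed

lemma Sup_range_left: "X \<subseteq> range f \<Longrightarrow> Sup X \<in> range f"
proof -
  assume "X \<subseteq> range f"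
  then have "X = f ` {x. f x \<in> X}" by blast
  then have "Sup X = f (Sup {x. f x \<in> X})" by (metis left_Sup)
  then show ?thesis by simp
qed

lemma Inf_range_right: "Y \<subseteq> range g \<Longrightarrow> Inf Y \<in> range g"
proof -
  assume "Y \<subseteq> range g"
  then have "Y = g ` {y. g y \<in> Y}" by blast
  then have "Inf Y = g (Inf {y. g y \<in> Y})" by (metis right_Inf)
  then show ?thesis by simp
qed

lemma complete_lattice_on_range_left: "complete_lattice_on (range f) (\<le>)"
  by (rule complete_lattice_on_Sup_closed[OF Sup_range_left])

lemma complete_lattice_on_range_right: "complete_lattice_on (range g) (\<le>)"
  by (rule complete_lattice_on_Inf_closed[OF Inf_range_right])

lemma lub_range_left: "X \<subseteq> range f \<Longrightarrow> lub (range f) (\<le>) X = Sup X"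
  by (rule complete_lattice_on.lub_unique[OF complete_lattice_on_range_left
        is_lub_Sup[OF _ Sup_range_left]])

lemma glb_range_right: "Y \<subseteq> range g \<Longrightarrow> glb (range g) (\<le>) Y = Inf Y"
  by (rule complete_lattice_on.glb_unique[OF complete_lattice_on_range_right
        is_glb_Inf[OF _ Inf_range_right]])

lemma glb_range_left: "X \<subseteq> range f \<Longrightarrow> glb (range f) (\<le>) X = f (g (Inf X))"
proof (rule complete_lattice_on.glb_unique[OF complete_lattice_on_range_left])
  assume X: "X \<subseteq> range f"
  show "is_glb (range f) (\<le>) X (f (g (Inf X)))"
    unfolding is_glb_def
  proof (intro conjI ballI impI)
    show "f (g (Inf X)) \<in> range f" by simp
    show "f (g (Inf X)) \<le> a" if "a \<in> X" for a
      using counit Inf_lower[OF that] by (rule order_trans)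
    fix y assume "y \<in> range f" and "\<forall>a\<in>X. y \<le> a"
    then obtain x where "y = f x" and "x \<le> g (Inf X)"
      by (auto simp flip: adjoint intro: Inf_greatest)
    then show "y \<le> f (g (Inf X))" by (simp add: mono_left)
  qed
qed

lemma lub_range_right: "Y \<subseteq> range g \<Longrightarrow> lub (range g) (\<le>) Y = g (f (Sup Y))"
proof (rule complete_lattice_on.lub_unique[OF complete_lattice_on_range_right])
  assume Y: "Y \<subseteq> range g"
  show "is_lub (range g) (\<le>) Y (g (f (Sup Y)))"
    unfolding is_lub_def
  proof (intro conjI ballI impI)
    show "g (f (Sup Y)) \<in> range g" by simp
    show "a \<le> g (f (Sup Y))" if "a \<in> Y" for a
      using Sup_upper[OF that] unit by (rule order_trans)
    fix z assume "z \<in> range g" and "\<forall>a\<in>Y. a \<le> z"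
    then obtain y where "z = g y" and "f (Sup Y) \<le> y"
      by (auto simp: adjoint intro: Sup_least)
    then show "g (f (Sup Y)) \<le> z" by (simp add: mono_right)
  qed
qed

lemma compl_distrib_range_iff: "compl_distrib (range f) (\<le>) \<longleftrightarrow> compl_distrib (range g) (\<le>)"
proof (rule compl_distrib_order_iso[OF complete_lattice_on_range_left complete_lattice_on_range_right])
  show "bij_betw g (range f) (range g)"
    by (rule bij_betw_byWitness[where f' = f]) (auto simp: left_right_left right_left_right)
  show "x \<le> y \<longleftrightarrow> g x \<le> g y" if "x \<in> range f" "y \<in> range f" for x y
    using that mono_right mono_left[of "g x" "g y"] by (auto simp: left_right_left)
qed

end

lemma galois_connection_uppB_lowW: "galois_connection (uppB R) (lowW R)"
  by unfold_locales (auto simp: uppB_def lowW_def succR_def predR_def)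

lemma galois_connection_uppW_lowB: "galois_connection (uppW R) (lowB R)"
  by unfold_locales (auto simp: uppW_def lowB_def succR_def predR_def)

interpretation uppB_lowW: galois_connection "uppB R" "lowW R" for R
  by (rule galois_connection_uppB_lowW)

interpretation uppW_lowB: galois_connection "uppW R" "lowB R" for R
  by (rule galois_connection_uppW_lowB)

lemma uminus_uppB: "- uppB R X = lowB R (- X)"
  unfolding uppB_def lowB_def by blast

lemma compl_distrib_uppB_iff_lowB:
  "compl_distrib (range (uppB R)) (\<subseteq>) \<longleftrightarrow> compl_distrib (range (lowB R)) (\<subseteq>)"
proof -
  have "compl_distrib (range (uppB R)) (\<subseteq>) \<longleftrightarrow> compl_distrib (range (lowB R)) (\<lambda>X Y. Y \<subseteq> X)"
  proof (rule compl_distrib_order_iso[OF uppB_lowW.complete_lattice_on_range_left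
        complete_lattice_on.converse[OF uppW_lowB.complete_lattice_on_range_right]])
    have "lowB R Y \<in> uminus ` range (uppB R)" for Y
      using uminus_uppB[of R "- Y"] by (metis double_compl rangeI image_eqI)
    then have "range (lowB R) = uminus ` range (uppB R)"
      by (auto simp: uminus_uppB)
    then show "bij_betw uminus (range (uppB R)) (range (lowB R))"
      by (simp add: bij_betw_def inj_on_def)
  qed auto
  also have "\<dots> \<longleftrightarrow> compl_distrib (range (lowB R)) (\<subseteq>)"
    by (rule complete_lattice_on.compl_distrib_converse_iff[OF
          uppW_lowB.complete_lattice_on_range_right])
  finally show ?thesis .
qed

lemma lowB_Int_singR: "lowB R X \<inter> singR R = uppB R X \<inter> singR R"
  unfolding singR_def lowB_def uppB_def by auto

lemma DMRS_memberD:
  assumes "p \<in> DMRS R"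
  shows "fst p \<in> range (lowB R)" "snd p \<in> range (uppB R)"
    "uppB R (uppW R (fst p)) \<subseteq> snd p" "fst p \<inter> singR R = snd p \<inter> singR R"
  using assms unfolding DMRS_def by auto

lemma DMRS_memberI:
  "\<lbrakk>A \<in> range (lowB R); B \<in> range (uppB R); uppB R (uppW R A) \<subseteq> B;
    A \<inter> singR R = B \<inter> singR R\<rbrakk> \<Longrightarrow> (A, B) \<in> DMRS R"
  unfolding DMRS_def by simp

lemma rough_set_in_DMRS: "(lowB R X, uppB R X) \<in> DMRS R"
proof -
  have "uppB R (uppW R (lowB R X)) \<subseteq> uppB R X"
    by (intro uppB_lowW.mono_left uppW_lowB.counit)
  then show ?thesis by (intro DMRS_memberI rangeI lowB_Int_singR)
qed

lemma DMRS_join_closed: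
  assumes X: "X \<subseteq> DMRS R"
  shows "(lowB R (uppW R (\<Union>(fst ` X))), \<Union>(snd ` X)) \<in> DMRS R"
proof -
  let ?U = "\<Union>(fst ` X)" and ?V = "\<Union>(snd ` X)"
  note D = DMRS_memberD[OF subsetD[OF X]]
  have V: "?V \<in> range (uppB R)" using D(2) by (intro uppB_lowW.Sup_range_left) blast
  have below: "uppB R (uppW R ?U) \<subseteq> ?V"
    using D(3) by (auto simp: uppB_lowW.left_Sup uppW_lowB.left_Sup)
  then have "uppB R (uppW R (lowB R (uppW R ?U))) \<subseteq> ?V"
    by (simp add: uppW_lowB.left_right_left)
  moreover have "lowB R (uppW R ?U) \<inter> singR R = ?V \<inter> singR R"
  proof
    show "lowB R (uppW R ?U) \<inter> singR R \<subseteq> ?V \<inter> singR R"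
      using below lowB_Int_singR[of R "uppW R ?U"] by blast
    show "?V \<inter> singR R \<subseteq> lowB R (uppW R ?U) \<inter> singR R"
      using D(4) uppW_lowB.unit[of ?U R] by blast
  qed
  ultimately show ?thesis by (intro DMRS_memberI[OF rangeI V])
qed

lemma DMRS_meet_closed:
  assumes X: "X \<subseteq> DMRS R"
  shows "(\<Inter>(fst ` X), uppB R (lowW R (\<Inter>(snd ` X)))) \<in> DMRS R"
proof -
  let ?I = "\<Inter>(fst ` X)" and ?J = "\<Inter>(snd ` X)"
  note D = DMRS_memberD[OF subsetD[OF X]]
  have I: "?I \<in> range (lowB R)" using D(1) by (intro uppW_lowB.Inf_range_right) blast
  have "uppB R (uppW R ?I) \<subseteq> snd p" if "p \<in> X" for p
    using that D(3)[OF that] uppB_lowW.mono_left[OF uppW_lowB.mono_left[of ?I "fst p" R]] by blast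
  then have "uppW R ?I \<subseteq> lowW R ?J" unfolding uppB_lowW.adjoint[symmetric] by blast
  then have below: "uppB R (uppW R ?I) \<subseteq> uppB R (lowW R ?J)" by (rule uppB_lowW.mono_left)
  moreover have "?I \<inter> singR R = uppB R (lowW R ?J) \<inter> singR R"
  proof
    show "?I \<inter> singR R \<subseteq> uppB R (lowW R ?J) \<inter> singR R"
      using uppW_lowB.unit[of ?I R] lowB_Int_singR[of R "uppW R ?I"] below by blast
    show "uppB R (lowW R ?J) \<inter> singR R \<subseteq> ?I \<inter> singR R"
      using uppB_lowW.counit[of R ?J] D(4) by blast
  qed
  ultimately show ?thesis by (intro DMRS_memberI[OF I rangeI])
qed

lemma complete_lattice_on_rough_pairs:
  "complete_lattice_on (range (lowB R) \<times> range (uppB R)) (prod_le (\<subseteq>) (\<subseteq>))"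
  by (rule complete_lattice_on_prod[OF uppW_lowB.complete_lattice_on_range_right
        uppB_lowW.complete_lattice_on_range_left])

lemma complete_sublattice_DMRS:
  "complete_sublattice (range (lowB R) \<times> range (uppB R)) (prod_le (\<subseteq>) (\<subseteq>)) (DMRS R)"
proof (intro complete_sublattice.intro complete_sublattice_axioms.intro
    complete_lattice_on_rough_pairs)
  show "DMRS R \<subseteq> range (lowB R) \<times> range (uppB R)" unfolding DMRS_def by blast
  fix X assume X: "X \<subseteq> DMRS R"
  then have X1: "fst ` X \<subseteq> range (lowB R)" and X2: "snd ` X \<subseteq> range (uppB R)"
    using DMRS_memberD by blast+
  have XP: "X \<subseteq> range (lowB R) \<times> range (uppB R)" using X1 X2 by force
  show "lub (range (lowB R) \<times> range (uppB R)) (prod_le (\<subseteq>) (\<subseteq>)) X \<in> DMRS R"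
    unfolding lub_prod[OF uppW_lowB.complete_lattice_on_range_right
        uppB_lowW.complete_lattice_on_range_left XP]
      uppW_lowB.lub_range_right[OF X1] uppB_lowW.lub_range_left[OF X2]
    by (rule DMRS_join_closed[OF X])
  show "glb (range (lowB R) \<times> range (uppB R)) (prod_le (\<subseteq>) (\<subseteq>)) X \<in> DMRS R"
    unfolding glb_prod[OF uppW_lowB.complete_lattice_on_range_right
        uppB_lowW.complete_lattice_on_range_left XP]
      uppW_lowB.glb_range_right[OF X1] uppB_lowW.glb_range_left[OF X2]
    by (rule DMRS_meet_closed[OF X])
qed

lemma pair_le_eq_prod_le: "pair_le = prod_le (\<subseteq>) (\<subseteq>)"
  by (intro ext) (simp add: pair_le_def prod_le_def)

lemma compl_distrib_uppB_if_DMRS: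
  assumes "compl_distrib (DMRS R) pair_le"
  shows "compl_distrib (range (uppB R)) (\<subseteq>)"
proof -
  let ?P = "range (lowB R) \<times> range (uppB R)" and ?le = "prod_le (\<subseteq>) (\<subseteq>)"
  interpret complete_sublattice ?P ?le "DMRS R" by (rule complete_sublattice_DMRS)
  note lattices = uppW_lowB.complete_lattice_on_range_right uppB_lowW.complete_lattice_on_range_left
  have snd_lub: "snd (lub (DMRS R) ?le X) = lub (range (uppB R)) (\<subseteq>) (snd ` X)"
    and snd_glb: "snd (glb (DMRS R) ?le X) = glb (range (uppB R)) (\<subseteq>) (snd ` X)"
    if X: "X \<subseteq> DMRS R" for X
  proof -
    have "X \<subseteq> ?P" using X subset by (rule order_trans)
    then show "snd (lub (DMRS R) ?le X) = lub (range (uppB R)) (\<subseteq>) (snd ` X)"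
      and "snd (glb (DMRS R) ?le X) = glb (range (uppB R)) (\<subseteq>) (snd ` X)"
      by (simp_all add: lub_sub[OF X] glb_sub[OF X] lub_prod[OF lattices] glb_prod[OF lattices])
  qed
  show ?thesis
  proof (rule compl_distrib_image[OF complete_lattice_on_sub lattices(2)])
    show "snd (lub (DMRS R) ?le X) = lub (range (uppB R)) (\<subseteq>) (snd ` X)"
      and "snd (glb (DMRS R) ?le X) = glb (range (uppB R)) (\<subseteq>) (snd ` X)"
      if "X \<subseteq> DMRS R" for X
      using snd_lub[OF that] snd_glb[OF that] .
    show "compl_distrib (DMRS R) ?le" using assms unfolding pair_le_eq_prod_le .
    show "snd ` DMRS R = range (uppB R)"
    proof
      show "snd ` DMRS R \<subseteq> range (uppB R)" using subset by auto
      show "range (uppB R) \<subseteq> snd ` DMRS R"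
      proof
        fix B assume "B \<in> range (uppB R)"
        then obtain Z where "B = snd (lowB R Z, uppB R Z)" by auto
        then show "B \<in> snd ` DMRS R" using rough_set_in_DMRS by (rule image_eqI)
      qed
    qed
  qed
qed

lemma compl_distrib_DMRS_if_rough_lattices:
  assumes "compl_distrib (range (lowB R)) (\<subseteq>)" and "compl_distrib (range (uppB R)) (\<subseteq>)"
  shows "compl_distrib (DMRS R) pair_le"
  unfolding pair_le_eq_prod_le
  by (rule complete_sublattice.compl_distrib_sub[OF complete_sublattice_DMRS compl_distrib_prod[OF
        uppW_lowB.complete_lattice_on_range_right uppB_lowW.complete_lattice_on_range_left assms]])

theorem mainTheorem4:
  fixes R :: "('a \<times> 'a) set"
  shows "(compl_distrib (DMRS R) pair_le \<longleftrightarrow> compl_distrib (range (uppB R)) (\<subseteq>))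
       \<and> (compl_distrib (DMRS R) pair_le \<longleftrightarrow> compl_distrib (range (lowB R)) (\<subseteq>))
       \<and> (compl_distrib (DMRS R) pair_le \<longleftrightarrow> compl_distrib (range (uppW R)) (\<subseteq>))
       \<and> (compl_distrib (DMRS R) pair_le \<longleftrightarrow> compl_distrib (range (lowW R)) (\<subseteq>))"
proof -
  have "compl_distrib (DMRS R) pair_le \<longleftrightarrow> compl_distrib (range (uppB R)) (\<subseteq>)"
    using compl_distrib_uppB_if_DMRS compl_distrib_DMRS_if_rough_lattices
      compl_distrib_uppB_iff_lowB by blast
  then show ?thesis
    using compl_distrib_uppB_iff_lowB[of R] uppB_lowW.compl_distrib_range_iff[of R]
      uppW_lowB.compl_distrib_range_iff[of R]
    by blast
qed

end
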